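(* Let $n \ge 1$, let $N=\{1,\dots,n\}$ be a set of agents, $A=[0,1]$, and let $f$ be an ordered weighted average (OWA) mechanism with weights $w_1,\dots,w_n \in [0,1]$, $\sum_{j=1}^n w_j = 1$. Then $f$ is not obviously manipulable (NOM) if and only if either (i) $w_j = 1$ for some $j \in \{1,\dots,n\}$, or (ii) $w_1 = w_n = 0$.
   Context: A mechanism is a map $f: A^n \to A$ taking a profile $x=(x_i)_{i\in N}$ of reported locations (peaks) and returning a facility location. For $x_i$ the true location of agent $i$ and $y\in A$ the facility location, agent $i$'s utility is $u(x_i,y) = 1-|x_i-y|$. Write $f(x_i', x_{-i})$ for the output when agent $i$ reports $x_i'$ and the others report $x_{-i}\in A^{n-1}$. An OWA mechanism with weights $w_1,\dots,w_n$ returns $f(x)=\sum_{j=1}^n w_j x_{\pi(j)}$, where $\pi$ is a permutation of $N$ with $x_{\pi(1)}\le x_{\pi(2)}\le\dots\le x_{\pi(n)}$ (the $j$-th weight is applied to the $j$-th smallest report). $f$ satisfies NOM if for every $i\in N$ and all $x_i, x_i' \in A$: $\max_{x_{-i}\in A^{n-1}} u(x_i, f(x_i,x_{-i})) \ge \max_{x_{-i}\in A^{n-1}} u(x_i, f(x_i',x_{-i}))$ and $\min_{x_{-i}\in A^{n-1}} u(x_i, f(x_i,x_{-i})) \ge \min_{x_{-i}\in A^{n-1}} u(x_i, f(x_i',x_{-i}))$. *)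

theory Defs
  imports Complex_Main
begin

text \<open>Agents are N = {1..n}; a profile is a function nat \<Rightarrow> real, only its values on N matter.
  The location space is A = {0..1}.\<close>

definition util :: "real \<Rightarrow> real \<Rightarrow> real" where
  "util xi y = 1 - \<bar>xi - y\<bar>"

definition owa :: "nat \<Rightarrow> (nat \<Rightarrow> real) \<Rightarrow> (nat \<Rightarrow> real) \<Rightarrow> real" where
  "owa n w x = (\<Sum>j<n. w (j + 1) * (sort (map x [1..<n+1])) ! j)"

text \<open>Reports of the agents other than i, each in A (component i is irrelevant, it is overwritten).\<close>
definition others :: "nat \<Rightarrow> nat \<Rightarrow> (nat \<Rightarrow> real) set" where
  "others n i = {y. \<forall>j\<in>{1..n} - {i}. y j \<in> {0..1}}"

text \<open>Not obviously manipulable. The max/min over x_{-i} in the paper are attained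
  for continuous mechanisms; we use Sup/Inf of the image set.\<close>
definition NOM :: "nat \<Rightarrow> ((nat \<Rightarrow> real) \<Rightarrow> real) \<Rightarrow> bool" where
  "NOM n f \<longleftrightarrow> (\<forall>i\<in>{1..n}. \<forall>xi\<in>{0..1}. \<forall>xi'\<in>{0..1}.
     (SUP y\<in>others n i. util xi (f (y(i := xi)))) \<ge> (SUP y\<in>others n i. util xi (f (y(i := xi')))) \<and>
     (INF y\<in>others n i. util xi (f (y(i := xi)))) \<ge> (INF y\<in>others n i. util xi (f (y(i := xi')))))"

end

theory Submission
  imports Defs "HOL-Library.Multiset"
begin

text \<open>When agent i reports d and the others report anything in [0,1], the OWA outcome lies
  between w n * d and w 1 * d + (1 - w 1), both attained by the constant profiles 0 and 1.
  So the best case of truthful reporting is always perfect, and the worst-case disutility of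
  reporting d with peak x is the larger distance from x to these two endpoints, worst_loss.
  NOM thus only depends on w 1 and w n, and holds iff both lie in {0, 1}: if 0 < w 1 < 1, an
  agent with peak (1 - w 1) / 4 is better off in the worst case reporting 0, and w n is the
  mirror image under x \<mapsto> 1 - x. As the weights are nonnegative and sum to 1, w 1 and w n
  lie in {0, 1} iff some weight is 1 or w 1 = w n = 0.\<close>

definition worst_loss :: "real \<Rightarrow> real \<Rightarrow> real \<Rightarrow> real \<Rightarrow> real" where
  "worst_loss a b x d = max \<bar>x - b * d\<bar> \<bar>x - (a * d + (1 - a))\<bar>"

lemma worst_loss_reflect: "worst_loss a b (1 - x) (1 - d) = worst_loss b a x d"
  unfolding worst_loss_def by (simp add: max.commute abs_minus_commute algebra_simps)

lemma worst_loss_misreport_0_less: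
  assumes "0 < a" "a < 1"
  shows "worst_loss a b ((1 - a) / 4) 0 < worst_loss a b ((1 - a) / 4) ((1 - a) / 4)"
proof -
  let ?x = "(1 - a) / 4"
  have "\<bar>?x - b * 0\<bar> = (1 - a) / 4" "\<bar>?x - (a * 0 + (1 - a))\<bar> = 3 * (1 - a) / 4"
    using assms by (simp_all add: abs_if field_simps)
  then have "worst_loss a b ?x 0 = 3 * (1 - a) / 4"
    using assms unfolding worst_loss_def by simp
  also have "\<dots> < (1 - a) * (1 - ?x)"
    using mult_pos_pos[of a "1 - a"] assms by (simp add: field_simps)
  also have "\<dots> = \<bar>- ((1 - a) * (1 - ?x))\<bar>"
    using assms by simp
  also have "\<dots> = \<bar>?x - (a * ?x + (1 - a))\<bar>"
    by (rule arg_cong[where f = abs]) (simp add: field_simps)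
  also have "\<dots> \<le> worst_loss a b ?x ?x"
    unfolding worst_loss_def by simp
  finally show ?thesis .
qed

lemma truthful_worst_loss_minimal_imp_extreme:
  assumes "\<forall>x\<in>{0..1}. \<forall>d\<in>{0..1}. worst_loss a b x x \<le> worst_loss a b x d"
    and "a \<in> {0..1}"
  shows "a \<in> {0, 1}"
proof (rule ccontr)
  assume "a \<notin> {0, 1}"
  with assms(2) have a: "0 < a" "a < 1" by auto
  then have "(1 - a) / 4 \<in> {0..1}" by simp
  with assms(1) have "worst_loss a b ((1 - a) / 4) ((1 - a) / 4) \<le> worst_loss a b ((1 - a) / 4) 0"
    by simp
  with worst_loss_misreport_0_less[of a b, OF a] show False by simp
qed

lemma truthful_worst_loss_minimal_iff:
  assumes "a \<in> {0..1}" "b \<in> {0..1}"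
  shows "(\<forall>x\<in>{0..1}. \<forall>d\<in>{0..1}. worst_loss a b x x \<le> worst_loss a b x d)
    \<longleftrightarrow> a \<in> {0, 1} \<and> b \<in> {0, 1}"
proof
  assume minimal: "\<forall>x\<in>{0..1}. \<forall>d\<in>{0..1}. worst_loss a b x x \<le> worst_loss a b x d"
  have "worst_loss b a x x \<le> worst_loss b a x d" if "x \<in> {0..1}" "d \<in> {0..1}" for x d
    using minimal[rule_format, of "1 - x" "1 - d"] that by (simp add: worst_loss_reflect)
  then show "a \<in> {0, 1} \<and> b \<in> {0, 1}"
    using truthful_worst_loss_minimal_imp_extreme minimal assms by blast
next
  assume extreme: "a \<in> {0, 1} \<and> b \<in> {0, 1}"
  show "\<forall>x\<in>{0..1}. \<forall>d\<in>{0..1}. worst_loss a b x x \<le> worst_loss a b x d"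
  proof (intro ballI)
    fix x d :: real
    have "\<bar>x - b * x\<bar> \<le> \<bar>x - b * d\<bar>" "\<bar>x - (a * x + (1 - a))\<bar> \<le> \<bar>x - (a * d + (1 - a))\<bar>"
      using extreme by auto
    then show "worst_loss a b x x \<le> worst_loss a b x d"
      unfolding worst_loss_def by (rule max.mono)
  qed
qed

lemma map_fun_upd_const_upt:
  assumes "i \<in> {1..n}"
  shows "map ((\<lambda>_. c)(i := d)) [1..<n+1] = (replicate n c)[i - 1 := d]"
  by (rule nth_equalityI) (use assms in \<open>auto simp del: upt_Suc simp: nth_list_update\<close>)

lemma insort_replicate:
  "insort d (replicate m c) = (if d \<le> c then d # replicate m c else replicate m c @ [d])"
  by (induction m) auto

lemma sort_map_fun_upd_const_upt:
  assumes "i \<in> {1..n}"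
  shows "sort (map ((\<lambda>_. c)(i := d)) [1..<n+1]) = insort d (replicate (n - 1) c)"
proof (rule properties_for_sort)
  obtain m where "n = Suc m" using assms by (cases n) auto
  then show "mset (insort d (replicate (n - 1) c)) = mset (map ((\<lambda>_. c)(i := d)) [1..<n+1])"
    unfolding map_fun_upd_const_upt[OF assms] using assms
    by (subst mset_update) (auto simp del: replicate_Suc)
qed (simp add: sorted_insort)

lemma sorted_weighted_sum_bounds:
  fixes s :: "real list" and w :: "nat \<Rightarrow> real"
  assumes s: "sorted s" "length s = n" "set s \<subseteq> {0..1}" "d \<in> set s"
    and w: "\<forall>j\<in>{1..n}. 0 \<le> w j" "(\<Sum>j=1..n. w j) = 1"
  shows "w n * d \<le> (\<Sum>j<n. w (j + 1) * s ! j)"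
    and "(\<Sum>j<n. w (j + 1) * s ! j) \<le> w 1 * d + (1 - w 1)"
proof -
  obtain k where k: "k < n" "s ! k = d" using s by (auto simp: in_set_conv_nth)
  then obtain m where m: "n = Suc m" by (cases n) auto
  have entry: "s ! j \<in> {0..1}" if "j < n" for j using s(2,3) nth_mem[of j s] that by blast
  have weight: "0 \<le> w (j + 1)" if "j < n" for j using w that by auto
  have "w n * d \<le> w n * s ! m"
    using sorted_nth_mono[OF s(1), of k m] s(2) k m weight[of m] by (simp add: mult_left_mono)
  also have "\<dots> \<le> (\<Sum>j<m. w (j + 1) * s ! j) + w n * s ! m"
    using weight entry m by (auto intro!: sum_nonneg)
  also have "\<dots> = (\<Sum>j<n. w (j + 1) * s ! j)" using m by simp
  finally show "w n * d \<le> (\<Sum>j<n. w (j + 1) * s ! j)" .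
  have "(\<Sum>j<n. w (j + 1) * s ! j) = w 1 * s ! 0 + (\<Sum>j<m. w (j + 2) * s ! Suc j)"
    unfolding m by (subst sum.lessThan_Suc_shift) simp
  also have "\<dots> \<le> w 1 * d + (\<Sum>j<m. w (j + 2))"
  proof (rule add_mono)
    show "w 1 * s ! 0 \<le> w 1 * d"
      using sorted_nth_mono[OF s(1), of 0 k] s(2) k weight[of 0] by (simp add: mult_left_mono)
    show "(\<Sum>j<m. w (j + 2) * s ! Suc j) \<le> (\<Sum>j<m. w (j + 2))"
      using weight entry m by (intro sum_mono) (simp add: mult_left_le)
  qed
  also have "(\<Sum>j<m. w (j + 2)) = 1 - w 1"
    using w(2) unfolding m One_nat_def sum.atLeast1_atMost_eq sum.lessThan_Suc_shift by simp
  finally show "(\<Sum>j<n. w (j + 1) * s ! j) \<le> w 1 * d + (1 - w 1)" .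
qed

lemma others_ne_empty: "others n i \<noteq> {}"
  by (auto simp: others_def)

lemma SUP_util_le_1: "(SUP y\<in>others n i. util x (f (y(i := d)))) \<le> 1"
  by (rule cSUP_least) (simp_all add: others_ne_empty util_def)

locale owa_weights =
  fixes n :: nat and w :: "nat \<Rightarrow> real"
  assumes n_ge_1: "n \<ge> 1"
    and weights_range: "\<forall>j\<in>{1..n}. w j \<in> {0..1}"
    and weights_sum: "(\<Sum>j=1..n. w j) = 1"
begin

lemma unit_weight_imp_others_zero:
  assumes "j \<in> {1..n}" "w j = 1" "k \<in> {1..n}" "k \<noteq> j"
  shows "w k = 0"
proof -
  have "(\<Sum>l\<in>{1..n} - {j}. w l) = 0"
    using weights_sum sum.remove[of "{1..n}" j w] assms(1,2) by simp
  then show ?thesis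
    using sum_nonneg_eq_0_iff[of "{1..n} - {j}" w] weights_range assms(3,4) by auto
qed

lemma unit_weight_or_extremes_zero_iff:
  "(\<exists>j\<in>{1..n}. w j = 1) \<or> (w 1 = 0 \<and> w n = 0) \<longleftrightarrow> w 1 \<in> {0, 1} \<and> w n \<in> {0, 1}"
proof
  assume "(\<exists>j\<in>{1..n}. w j = 1) \<or> (w 1 = 0 \<and> w n = 0)"
  then show "w 1 \<in> {0, 1} \<and> w n \<in> {0, 1}"
    using unit_weight_imp_others_zero[of _ 1] unit_weight_imp_others_zero[of _ n] n_ge_1 by fastforce
next
  assume "w 1 \<in> {0, 1} \<and> w n \<in> {0, 1}"
  then show "(\<exists>j\<in>{1..n}. w j = 1) \<or> (w 1 = 0 \<and> w n = 0)"
    using n_ge_1 by force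
qed

lemma owa_bounds:
  assumes "\<forall>j\<in>{1..n}. x j \<in> {0..1}" "i \<in> {1..n}"
  shows "w n * x i \<le> owa n w x" "owa n w x \<le> w 1 * x i + (1 - w 1)"
proof -
  let ?s = "sort (map x [1..<n+1])"
  have "set ?s \<subseteq> {0..1}" "x i \<in> set ?s"
    using assms by (auto simp del: upt_Suc)
  then show "w n * x i \<le> owa n w x" "owa n w x \<le> w 1 * x i + (1 - w 1)"
    unfolding owa_def
    using sorted_weighted_sum_bounds[of ?s n "x i" w] weights_range weights_sum by auto
qed

lemma owa_fun_upd_const:
  assumes "i \<in> {1..n}"
  shows "owa n w ((\<lambda>_. c)(i := d)) =
    (if d \<le> c then w 1 * d + (1 - w 1) * c else (1 - w n) * c + w n * d)"
proof -
  obtain m where m: "n = Suc m" using n_ge_1 by (cases n) auto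
  have sum_tail: "(\<Sum>j<m. w (j + 2)) = 1 - w 1"
    using weights_sum
    unfolding m One_nat_def sum.atLeast1_atMost_eq sum.lessThan_Suc_shift by simp
  have sum_init: "(\<Sum>j<m. w (j + 1)) = 1 - w n"
    using weights_sum unfolding m One_nat_def sum.atLeast1_atMost_eq by simp
  have owa_eq:
    "owa n w ((\<lambda>_. c)(i := d)) = (\<Sum>j<Suc m. w (j + 1) * insort d (replicate m c) ! j)"
    unfolding owa_def sort_map_fun_upd_const_upt[OF assms] using m by simp
  show ?thesis
  proof (cases "d \<le> c")
    case True
    have "owa n w ((\<lambda>_. c)(i := d)) = w 1 * d + (\<Sum>j<m. w (j + 2)) * c"
      unfolding owa_eq insort_replicate using True
      by (subst sum.lessThan_Suc_shift) (simp add: sum_distrib_right)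
    then show ?thesis using True sum_tail by simp
  next
    case False
    then have "owa n w ((\<lambda>_. c)(i := d)) = (\<Sum>j<m. w (j + 1)) * c + w n * d"
      unfolding owa_eq insort_replicate by (simp add: nth_append sum_distrib_right m)
    then show ?thesis using False sum_init by simp
  qed
qed

lemma SUP_util_owa_truthful:
  assumes "i \<in> {1..n}" "x \<in> {0..1}"
  shows "(SUP y\<in>others n i. util x (owa n w (y(i := x)))) = 1"
proof (rule antisym)
  have "util x (owa n w ((\<lambda>_. x)(i := x))) = 1"
    using owa_fun_upd_const[OF assms(1)] by (simp add: util_def algebra_simps)
  moreover have "util x (owa n w ((\<lambda>_. x)(i := x)))
      \<le> (SUP y\<in>others n i. util x (owa n w (y(i := x))))"
    by (rule cSUP_upper)
      (use assms(2) in \<open>auto simp: others_def util_def intro!: bdd_aboveI2[where M = 1]\<close>)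
  ultimately show "1 \<le> (SUP y\<in>others n i. util x (owa n w (y(i := x))))" by simp
qed (rule SUP_util_le_1)

lemma INF_util_owa:
  assumes i: "i \<in> {1..n}" and "x \<in> {0..1}" "d \<in> {0..1}"
  shows "(INF y\<in>others n i. util x (owa n w (y(i := d)))) = 1 - worst_loss (w 1) (w n) x d"
proof (rule antisym)
  have lower: "1 - worst_loss (w 1) (w n) x d \<le> util x (owa n w (y(i := d)))"
    if "y \<in> others n i" for y
  proof -
    have "w n * d \<le> owa n w (y(i := d))" "owa n w (y(i := d)) \<le> w 1 * d + (1 - w 1)"
      using owa_bounds[of "y(i := d)" i] that assms by (auto simp: others_def)
    then show ?thesis unfolding util_def worst_loss_def by arith
  qed
  show "1 - worst_loss (w 1) (w n) x d \<le> (INF y\<in>others n i. util x (owa n w (y(i := d))))"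
    using lower others_ne_empty by (intro cINF_greatest) auto
  have at_const: "(INF y\<in>others n i. util x (owa n w (y(i := d))))
      \<le> util x (owa n w ((\<lambda>_. c)(i := d)))" if "c \<in> {0..1}" for c
    by (rule cINF_lower) (use that lower in \<open>auto simp: others_def intro!: bdd_belowI2\<close>)
  show "(INF y\<in>others n i. util x (owa n w (y(i := d)))) \<le> 1 - worst_loss (w 1) (w n) x d"
    using at_const[of 0] at_const[of 1] assms(3)
      owa_fun_upd_const[OF i, of 0 d] owa_fun_upd_const[OF i, of 1 d]
    unfolding util_def worst_loss_def by (auto split: if_splits)
qed

lemma NOM_owa_iff:
  "NOM n (owa n w) \<longleftrightarrow>
    (\<forall>x\<in>{0..1}. \<forall>d\<in>{0..1}. worst_loss (w 1) (w n) x x \<le> worst_loss (w 1) (w n) x d)"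
  unfolding NOM_def using n_ge_1
  by (auto simp: SUP_util_owa_truthful SUP_util_le_1 INF_util_owa)

end

theorem theorem2:
  fixes n :: nat and w :: "nat \<Rightarrow> real"
  assumes "n \<ge> 1"
    and "\<forall>j\<in>{1..n}. w j \<in> {0..1}"
    and "(\<Sum>j=1..n. w j) = 1"
  shows "NOM n (owa n w) \<longleftrightarrow> ((\<exists>j\<in>{1..n}. w j = 1) \<or> (w 1 = 0 \<and> w n = 0))"
proof -
  interpret owa_weights n w using assms by unfold_locales
  have "w 1 \<in> {0..1}" "w n \<in> {0..1}" using assms(1,2) by auto
  then show ?thesis
    using NOM_owa_iff truthful_worst_loss_minimal_iff unit_weight_or_extremes_zero_iff by simp
qed

end
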